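(* Let $a$ be a global-in-time solution of $$\partial_t a+\Big(\int_{-\pi}^x a(t,\bar x)\,d\bar x\Big)\partial_x a-a^2+\frac1\pi\int_{-\pi}^{\pi}a^2\,dx=0,\qquad \int_{-\pi}^\pi a(t,x)dx=0,\qquad x\in[-\pi,\pi],$$ such that $a(t,\cdot)$ is even for all $t\ge0$, and assume that $\|a(t,\cdot)-\mu\cos(\cdot)\|_{L^\infty([-\pi,\pi])}\to0$ as $t\to\infty$ for some $\mu>0$. Then for all $\kappa_0>0$ and $\delta\in(0,\frac1\mu)$ there exists $\kappa\in(0,\kappa_0)$ such that if $0<|z_0|\le\kappa$ then the characteristic $z$ starting from $z_0$ satisfies $$|z(t)|\le\kappa_0\qquad\text{for all }0\le t\le t_0:=\Big(\frac1\mu-\delta\Big)\ln\Big(\frac{\kappa_0}{|z_0|}\Big).$$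
   Context: The characteristic starting from $z_0$ is the solution of $\dot z(t)=\int_{-\pi}^{z(t)}a(t,x)\,dx$, $z(0)=z_0$. *)

theory Defs
  imports "HOL-Analysis.Analysis"
begin

definition is_global_solution ::
  "(real \<Rightarrow> real \<Rightarrow> real) \<Rightarrow> (real \<Rightarrow> real \<Rightarrow> real) \<Rightarrow> (real \<Rightarrow> real \<Rightarrow> real) \<Rightarrow> bool" where
  "is_global_solution a dta dxa \<longleftrightarrow>
     continuous_on ({0..} \<times> {-pi..pi}) (\<lambda>(t, x). a t x) \<and>
     (\<forall>t\<ge>0. \<forall>x\<in>{-pi..pi}.
        ((\<lambda>s. a s x) has_real_derivative dta t x) (at t within {0..}) \<and>
        ((\<lambda>y. a t y) has_real_derivative dxa t x) (at x within {-pi..pi}) \<and>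
        dta t x + integral {-pi..x} (a t) * dxa t x - (a t x)^2
          + (1/pi) * integral {-pi..pi} (\<lambda>y. (a t y)^2) = 0) \<and>
     (\<forall>t\<ge>0. integral {-pi..pi} (a t) = 0)"

definition characteristic :: "(real \<Rightarrow> real \<Rightarrow> real) \<Rightarrow> real \<Rightarrow> (real \<Rightarrow> real) \<Rightarrow> bool" where
  "characteristic a z0 z \<longleftrightarrow>
     z 0 = z0 \<and>
     (\<forall>t\<ge>0. z t \<in> {-pi..pi} \<and>
        (z has_real_derivative integral {-pi..z t} (a t)) (at t within {0..}))"

end

theory Submission
  imports Defs
begin

text \<open>Because \<open>a(t,\<cdot>)\<close> is even with mean zero, \<open>\<integral>\<^bsub>-\<pi>\<^esub>\<^bsup>0\<^esup> a(t,x) dx = 0\<close>, so a characteristic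
  moves with speed at most \<open>sup |a(t,\<cdot>)| \<cdot> |z|\<close>, and Gronwall's inequality bounds its growth
  exponentially at that rate. Choose \<open>\<mu> < L < 1/q\<close> with \<open>q = 1/\<mu> - \<delta>\<close>. After some time \<open>T\<close> the
  uniform convergence gives \<open>sup |a| \<le> L\<close>; on \<open>[0,T]\<close> the solution is bounded by some \<open>M\<close>.
  Hence \<open>|z(t)| \<le> |z\<^sub>0| exp(MT + Lt) \<le> |z\<^sub>0| exp(MT) (\<kappa>\<^sub>0/|z\<^sub>0|)\<^sup>L\<^sup>q\<close> for \<open>t \<le> q ln(\<kappa>\<^sub>0/|z\<^sub>0|)\<close>,
  and since \<open>Lq < 1\<close> the factor \<open>(|z\<^sub>0|/\<kappa>\<^sub>0)\<^sup>1\<^sup>-\<^sup>L\<^sup>q\<close> absorbs \<open>exp(MT)\<close> once \<open>|z\<^sub>0|\<close> is small.\<close>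

lemma abs_le_exp_growth_if_abs_deriv_le:
  fixes z u :: "real \<Rightarrow> real"
  assumes deriv: "\<And>t. t \<in> {t1..t2} \<Longrightarrow> (z has_real_derivative u t) (at t within {t1..t2})"
    and bound: "\<And>t. t \<in> {t1..t2} \<Longrightarrow> \<bar>u t\<bar> \<le> K * \<bar>z t\<bar>"
    and "t1 \<le> t2"
  shows "\<bar>z t2\<bar> \<le> \<bar>z t1\<bar> * exp (K * (t2 - t1))"
proof -
  define h where "h t = (z t)\<^sup>2 * exp (- 2 * K * t)" for t
  have "h t2 \<le> h t1"
  proof (rule DERIV_nonpos_imp_decreasing_open[OF \<open>t1 \<le> t2\<close>])
    fix x assume x: "t1 < x" "x < t2"
    then have "(z has_real_derivative u x) (at x)"
      using deriv[of x] at_within_Icc_at[OF x] by simp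
    then have "(h has_real_derivative 2 * exp (- 2 * K * x) * (z x * u x - K * (z x)\<^sup>2)) (at x)"
      unfolding h_def by (auto intro!: derivative_eq_intros simp: algebra_simps)
    moreover have "z x * u x \<le> K * (z x)\<^sup>2"
    proof -
      have "z x * u x \<le> \<bar>z x\<bar> * \<bar>u x\<bar>" by (simp add: abs_mult[symmetric])
      also have "\<dots> \<le> \<bar>z x\<bar> * (K * \<bar>z x\<bar>)" using bound x by (intro mult_left_mono) auto
      also have "\<dots> = K * \<bar>z x\<bar>\<^sup>2" by (simp add: power2_eq_square)
      finally show ?thesis by simp
    qed
    ultimately show "\<exists>y. (h has_real_derivative y) (at x) \<and> y \<le> 0"
      by (intro exI conjI) (auto intro!: mult_nonneg_nonpos)
  next
    show "continuous_on {t1..t2} h"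
      unfolding h_def by (intro continuous_intros DERIV_continuous_on[OF deriv])
  qed
  then have "(z t2)\<^sup>2 \<le> (z t1)\<^sup>2 * exp (2 * K * (t2 - t1))"
    unfolding h_def by (simp add: field_simps exp_diff exp_minus)
  also have "\<dots> = (\<bar>z t1\<bar> * exp (K * (t2 - t1)))\<^sup>2"
    by (simp add: power_mult_distrib exp_double[symmetric] mult.assoc)
  finally have "\<bar>z t2\<bar> \<le> \<bar>\<bar>z t1\<bar> * exp (K * (t2 - t1))\<bar>"
    by (simp only: abs_le_square_iff)
  then show ?thesis by simp
qed

lemma integral_left_half_eq_0_if_even:
  fixes f :: "real \<Rightarrow> real"
  assumes "f integrable_on {-c..c}" and "0 \<le> c"
    and even: "\<And>x. x \<in> {-c..c} \<Longrightarrow> f (- x) = f x"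
    and mean: "integral {-c..c} f = 0"
  shows "integral {-c..0} f = 0"
proof -
  have "integral {0..c} f = integral {-c..-0} (\<lambda>x. f (- x))"
    by (rule Henstock_Kurzweil_Integration.integral_reflect_real[symmetric])
  also have "\<dots> = integral {-c..0} f"
    unfolding minus_zero by (rule integral_cong) (use even in auto)
  finally show ?thesis
    using Henstock_Kurzweil_Integration.integral_combine[OF _ _ assms(1), of 0] mean \<open>0 \<le> c\<close>
    by simp
qed

lemma abs_integral_even_mean_zero_le:
  fixes f :: "real \<Rightarrow> real"
  assumes cont: "continuous_on {-c..c} f"
    and even: "\<And>x. x \<in> {-c..c} \<Longrightarrow> f (- x) = f x"
    and mean: "integral {-c..c} f = 0"
    and bound: "\<And>x. x \<in> {-c..c} \<Longrightarrow> \<bar>f x\<bar> \<le> K"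
    and y: "y \<in> {-c..c}"
  shows "\<bar>integral {-c..y} f\<bar> \<le> K * \<bar>y\<bar>"
proof -
  have integrable: "f integrable_on {u..v}" if "{u..v} \<subseteq> {-c..c}" for u v
    using that by (intro integrable_continuous_real continuous_on_subset[OF cont])
  have left_half: "integral {-c..0} f = 0"
    using y by (intro integral_left_half_eq_0_if_even integrable even mean) auto
  show ?thesis
  proof (cases "0 \<le> y")
    case True
    have "integral {-c..y} f = integral {0..y} f"
      using Henstock_Kurzweil_Integration.integral_combine[of "-c" 0 y f] integrable[of "-c" y]
        True y left_half by simp
    moreover have "norm (integral {0..y} f) \<le> K * (y - 0)"
      using True y bound by (intro integral_bound continuous_on_subset[OF cont]) auto
    ultimately show ?thesis using True by simp
  next
    case False
    have "integral {-c..y} f = - integral {y..0} f"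
      using Henstock_Kurzweil_Integration.integral_combine[of "-c" y 0 f] integrable[of "-c" 0]
        False y left_half by simp
    moreover have "norm (integral {y..0} f) \<le> K * (0 - y)"
      using False y bound by (intro integral_bound continuous_on_subset[OF cont]) auto
    ultimately show ?thesis using False by simp
  qed
qed

lemma eventually_abs_le_if_uniform_limit_bounded:
  fixes a :: "real \<Rightarrow> 'a::topological_space \<Rightarrow> real"
  assumes "compact S"
    and cont: "\<And>t. t \<ge> 0 \<Longrightarrow> continuous_on S (a t)" and "continuous_on S g"
    and g_bound: "\<And>x. x \<in> S \<Longrightarrow> \<bar>g x\<bar> \<le> \<mu>" and "\<mu> < L"
    and conv: "((\<lambda>t. SUP x\<in>S. \<bar>a t x - g x\<bar>) \<longlongrightarrow> 0) at_top"
  shows "\<forall>\<^sub>F t in at_top. \<forall>x\<in>S. \<bar>a t x\<bar> \<le> L"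
proof -
  have "\<forall>\<^sub>F t in at_top. (SUP x\<in>S. \<bar>a t x - g x\<bar>) < L - \<mu>"
    using order_tendstoD(2)[OF conv] \<open>\<mu> < L\<close> by simp
  with eventually_ge_at_top[of 0] show ?thesis
  proof eventually_elim
    case (elim t)
    show ?case
    proof
      fix x assume x: "x \<in> S"
      \<comment> \<open>Without boundedness the \<open>SUP\<close> would be a junk value and bound nothing.\<close>
      have "bdd_above ((\<lambda>x. \<bar>a t x - g x\<bar>) ` S)"
        using elim \<open>compact S\<close> \<open>continuous_on S g\<close>
        by (intro bounded_imp_bdd_above compact_imp_bounded compact_continuous_image
            continuous_intros cont)
      then have "\<bar>a t x - g x\<bar> < L - \<mu>"
        using cSUP_upper[OF x] elim by fastforce
      with g_bound[OF x] show "\<bar>a t x\<bar> \<le> L" by linarith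
    qed
  qed
qed

lemma global_solution_continuous_on_slice:
  assumes "is_global_solution a dta dxa" and "t \<ge> 0"
  shows "continuous_on {-pi..pi} (a t)"
proof -
  have "continuous_on ({0..} \<times> {-pi..pi}) (\<lambda>(t, x). a t x)"
    using assms unfolding is_global_solution_def by simp
  then have "continuous_on {-pi..pi} (\<lambda>x. (\<lambda>(t, x). a t x) (t, x))"
    by (rule continuous_on_compose2) (use \<open>t \<ge> 0\<close> in \<open>auto intro!: continuous_on_Pair\<close>)
  then show ?thesis by simp
qed

lemma global_solution_bounded_on_strip:
  assumes "is_global_solution a dta dxa"
  obtains M where "M \<ge> 0" "\<And>t x. t \<in> {0..T} \<Longrightarrow> x \<in> {-pi..pi} \<Longrightarrow> \<bar>a t x\<bar> \<le> M"
proof -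
  have "continuous_on ({0..T} \<times> {-pi..pi}) (\<lambda>(t, x). a t x)"
    using assms unfolding is_global_solution_def by (auto elim: continuous_on_subset)
  then have "bounded ((\<lambda>(t, x). a t x) ` ({0..T} \<times> {-pi..pi}))"
    by (intro compact_imp_bounded compact_continuous_image compact_Times) auto
  then obtain M where "M > 0" and M: "\<forall>y \<in> (\<lambda>(t, x). a t x) ` ({0..T} \<times> {-pi..pi}). norm y \<le> M"
    using bounded_pos by blast
  have bound: "\<bar>a t x\<bar> \<le> M" if "t \<in> {0..T}" "x \<in> {-pi..pi}" for t x
    using M that by force
  show thesis
    by (rule that[OF _ bound]) (use \<open>M > 0\<close> in auto)
qed

lemma global_solution_two_phase_bound:
  assumes sol: "is_global_solution a dta dxa"
    and conv: "((\<lambda>t. SUP x\<in>{-pi..pi}. \<bar>a t x - \<mu> * cos x\<bar>) \<longlongrightarrow> 0) at_top"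
    and "0 < \<mu>" "\<mu> < L"
  obtains T M where "0 \<le> T" "0 \<le> M"
    "\<And>t x. t \<in> {0..T} \<Longrightarrow> x \<in> {-pi..pi} \<Longrightarrow> \<bar>a t x\<bar> \<le> M"
    "\<And>t x. T \<le> t \<Longrightarrow> x \<in> {-pi..pi} \<Longrightarrow> \<bar>a t x\<bar> \<le> L"
proof -
  have "\<forall>\<^sub>F t in at_top. \<forall>x\<in>{-pi..pi}. \<bar>a t x\<bar> \<le> L"
    using \<open>0 < \<mu>\<close> \<open>\<mu> < L\<close>
    by (intro eventually_abs_le_if_uniform_limit_bounded[OF _ _ _ _ _ conv]
        global_solution_continuous_on_slice[OF sol] continuous_intros)
      (auto simp: abs_mult)
  then obtain T where "0 \<le> T" and late: "\<And>t x. T \<le> t \<Longrightarrow> x \<in> {-pi..pi} \<Longrightarrow> \<bar>a t x\<bar> \<le> L"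
    unfolding eventually_at_top_linorder by (metis max.boundedE max.cobounded2)
  obtain M where "0 \<le> M" and early: "\<And>t x. t \<in> {0..T} \<Longrightarrow> x \<in> {-pi..pi} \<Longrightarrow> \<bar>a t x\<bar> \<le> M"
    using global_solution_bounded_on_strip[OF sol] by blast
  from that[OF \<open>0 \<le> T\<close> \<open>0 \<le> M\<close> early late] show thesis .
qed

lemma characteristic_abs_le_exp_growth:
  assumes sol: "is_global_solution a dta dxa"
    and even: "\<forall>t\<ge>0. \<forall>x\<in>{-pi..pi}. a t (-x) = a t x"
    and char: "characteristic a z0 z"
    and "0 \<le> t1" "t1 \<le> t2"
    and bound: "\<And>t x. t \<in> {t1..t2} \<Longrightarrow> x \<in> {-pi..pi} \<Longrightarrow> \<bar>a t x\<bar> \<le> K"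
  shows "\<bar>z t2\<bar> \<le> \<bar>z t1\<bar> * exp (K * (t2 - t1))"
proof (rule abs_le_exp_growth_if_abs_deriv_le[OF _ _ \<open>t1 \<le> t2\<close>])
  fix t assume t: "t \<in> {t1..t2}"
  then have "t \<ge> 0" using \<open>0 \<le> t1\<close> by simp
  then have z_t: "z t \<in> {-pi..pi}"
    and "(z has_real_derivative integral {-pi..z t} (a t)) (at t within {0..})"
    using char unfolding characteristic_def by auto
  then show "(z has_real_derivative integral {-pi..z t} (a t)) (at t within {t1..t2})"
    using \<open>0 \<le> t1\<close> by (auto elim: DERIV_subset)
  show "\<bar>integral {-pi..z t} (a t)\<bar> \<le> K * \<bar>z t\<bar>"
    using sol \<open>t \<ge> 0\<close> even t z_t unfolding is_global_solution_def
    by (intro abs_integral_even_mean_zero_le global_solution_continuous_on_slice[OF sol] bound)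
      auto
qed

lemma characteristic_abs_le_exp_two_phase:
  assumes sol: "is_global_solution a dta dxa"
    and even: "\<forall>t\<ge>0. \<forall>x\<in>{-pi..pi}. a t (-x) = a t x"
    and char: "characteristic a z0 z"
    and "0 \<le> T" "0 \<le> M" "0 \<le> L"
    and early: "\<And>t x. t \<in> {0..T} \<Longrightarrow> x \<in> {-pi..pi} \<Longrightarrow> \<bar>a t x\<bar> \<le> M"
    and late: "\<And>t x. T \<le> t \<Longrightarrow> x \<in> {-pi..pi} \<Longrightarrow> \<bar>a t x\<bar> \<le> L"
    and "0 \<le> t"
  shows "\<bar>z t\<bar> \<le> \<bar>z0\<bar> * exp (M * T + L * t)"
proof -
  have z0: "z 0 = z0" using char unfolding characteristic_def by simp
  have early_growth: "\<bar>z s\<bar> \<le> \<bar>z0\<bar> * exp (M * s)" if "s \<in> {0..T}" for s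
    using characteristic_abs_le_exp_growth[OF sol even char, of 0 s M] that early z0 by simp
  show ?thesis
  proof (cases "t \<le> T")
    case True
    have "\<bar>z t\<bar> \<le> \<bar>z0\<bar> * exp (M * t)" using early_growth True \<open>0 \<le> t\<close> by simp
    also have "\<dots> \<le> \<bar>z0\<bar> * exp (M * T + L * t)"
    proof -
      have "M * t \<le> M * T + L * t"
        using True \<open>0 \<le> M\<close> mult_left_mono[of t T M] mult_nonneg_nonneg[OF \<open>0 \<le> L\<close> \<open>0 \<le> t\<close>]
        by linarith
      then show ?thesis by (simp add: mult_left_mono)
    qed
    finally show ?thesis .
  next
    case False
    have "\<bar>z t\<bar> \<le> \<bar>z T\<bar> * exp (L * (t - T))"
      using characteristic_abs_le_exp_growth[OF sol even char \<open>0 \<le> T\<close>, of t L] False late by simp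
    also have "\<dots> \<le> \<bar>z0\<bar> * exp (M * T) * exp (L * (t - T))"
      using early_growth[of T] \<open>0 \<le> T\<close> by (intro mult_right_mono) auto
    also have "\<dots> = \<bar>z0\<bar> * exp (M * T + L * t - L * T)"
      by (simp add: mult.assoc exp_add[symmetric] right_diff_distrib)
    also have "\<dots> \<le> \<bar>z0\<bar> * exp (M * T + L * t)"
      using \<open>0 \<le> T\<close> \<open>0 \<le> L\<close> by (simp add: mult_left_mono)
    finally show ?thesis .
  qed
qed

lemma mult_exp_le_if_small_start:
  fixes r k C p s :: real
  assumes "0 < r" "0 < k" "p < 1"
    and small: "r \<le> k * exp (- C / (1 - p))"
    and s: "s \<le> p * ln (k / r)"
  shows "r * exp (C + s) \<le> k"
proof -
  have "ln r \<le> ln k - C / (1 - p)"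
    using ln_mono[OF small \<open>0 < r\<close>] \<open>0 < k\<close> by (simp add: ln_mult)
  then have "C \<le> (1 - p) * ln (k / r)"
    using \<open>p < 1\<close> \<open>0 < r\<close> \<open>0 < k\<close> by (simp add: ln_div field_simps)
  with s have "C + s \<le> ln (k / r)" by (simp add: algebra_simps)
  then have "exp (C + s) \<le> k / r"
    using \<open>0 < r\<close> \<open>0 < k\<close> by (metis divide_pos_pos exp_le_cancel_iff exp_ln)
  then show ?thesis using \<open>0 < r\<close> by (simp add: field_simps)
qed

lemma small_radius_absorbs_exp_growth:
  fixes k C L q :: real
  assumes "0 < k" "0 \<le> C" "0 \<le> L" "L * q < 1"
  obtains \<kappa> where "0 < \<kappa>" "\<kappa> < k"
    "\<And>r s. 0 < r \<Longrightarrow> r \<le> \<kappa> \<Longrightarrow> s \<le> q * ln (k / r) \<Longrightarrow> r * exp (C + L * s) \<le> k"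
proof
  define E where "E = exp (- C / (1 - L * q))"
  have "0 < E" "E \<le> 1"
    using assms unfolding E_def by simp_all
  then show "0 < k * E / 2" "k * E / 2 < k"
    using \<open>0 < k\<close> mult_left_mono[OF \<open>E \<le> 1\<close>, of k] by simp_all
  fix r s
  assume "0 < r" "r \<le> k * E / 2" "s \<le> q * ln (k / r)"
  show "r * exp (C + L * s) \<le> k"
  proof (rule mult_exp_le_if_small_start)
    show "r \<le> k * exp (- C / (1 - L * q))"
      using \<open>r \<le> k * E / 2\<close> mult_pos_pos[OF \<open>0 < k\<close> \<open>0 < E\<close>]
      unfolding E_def[symmetric] by linarith
    show "L * s \<le> L * q * ln (k / r)"
      using \<open>s \<le> q * ln (k / r)\<close> \<open>0 \<le> L\<close> by (simp add: mult.assoc mult_left_mono)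
  qed (use assms \<open>0 < r\<close> in auto)
qed

theorem lemma6p1:
  fixes a dta dxa :: "real \<Rightarrow> real \<Rightarrow> real" and \<mu> :: real
  assumes sol: "is_global_solution a dta dxa"
    and even: "\<forall>t\<ge>0. \<forall>x\<in>{-pi..pi}. a t (-x) = a t x"
    and mu_pos: "\<mu> > 0"
    and conv: "((\<lambda>t. SUP x\<in>{-pi..pi}. \<bar>a t x - \<mu> * cos x\<bar>) \<longlongrightarrow> 0) at_top"
  shows "\<forall>\<kappa>0 > 0. \<forall>\<delta>. 0 < \<delta> \<and> \<delta> < 1 / \<mu> \<longrightarrow>
           (\<exists>\<kappa>. 0 < \<kappa> \<and> \<kappa> < \<kappa>0 \<and>
              (\<forall>z0 z. 0 < \<bar>z0\<bar> \<and> \<bar>z0\<bar> \<le> \<kappa> \<and> characteristic a z0 z \<longrightarrow>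
                 (\<forall>t. 0 \<le> t \<and> t \<le> (1 / \<mu> - \<delta>) * ln (\<kappa>0 / \<bar>z0\<bar>) \<longrightarrow> \<bar>z t\<bar> \<le> \<kappa>0)))"
proof (intro allI impI)
  fix \<kappa>0 \<delta> :: real
  assume "\<kappa>0 > 0" and \<delta>: "0 < \<delta> \<and> \<delta> < 1 / \<mu>"
  define q where "q = 1 / \<mu> - \<delta>"
  have "\<mu> < 1 / q" using \<delta> mu_pos unfolding q_def by (auto simp: field_simps)
  then obtain L where "\<mu> < L" "L < 1 / q" using dense by blast
  then have "0 < L" "L * q < 1"
    using \<delta> mu_pos unfolding q_def by (auto simp: field_simps)
  obtain T M where "0 \<le> T" "0 \<le> M"
    and early: "\<And>t x. t \<in> {0..T} \<Longrightarrow> x \<in> {-pi..pi} \<Longrightarrow> \<bar>a t x\<bar> \<le> M"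
    and late: "\<And>t x. T \<le> t \<Longrightarrow> x \<in> {-pi..pi} \<Longrightarrow> \<bar>a t x\<bar> \<le> L"
    using global_solution_two_phase_bound[OF sol conv mu_pos \<open>\<mu> < L\<close>] by blast
  obtain \<kappa> where \<kappa>: "0 < \<kappa>" "\<kappa> < \<kappa>0"
    and small: "\<And>r s. 0 < r \<Longrightarrow> r \<le> \<kappa> \<Longrightarrow> s \<le> q * ln (\<kappa>0 / r) \<Longrightarrow> r * exp (M * T + L * s) \<le> \<kappa>0"
    using small_radius_absorbs_exp_growth[of \<kappa>0 "M * T" L q] \<open>\<kappa>0 > 0\<close> \<open>0 \<le> M\<close> \<open>0 \<le> T\<close> \<open>0 < L\<close>
      \<open>L * q < 1\<close> by auto
  show "\<exists>\<kappa>. 0 < \<kappa> \<and> \<kappa> < \<kappa>0 \<and>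
          (\<forall>z0 z. 0 < \<bar>z0\<bar> \<and> \<bar>z0\<bar> \<le> \<kappa> \<and> characteristic a z0 z \<longrightarrow>
             (\<forall>t. 0 \<le> t \<and> t \<le> (1 / \<mu> - \<delta>) * ln (\<kappa>0 / \<bar>z0\<bar>) \<longrightarrow> \<bar>z t\<bar> \<le> \<kappa>0))"
  proof (intro exI[of _ \<kappa>] conjI allI impI \<kappa>)
    fix z0 z t
    assume z0: "0 < \<bar>z0\<bar> \<and> \<bar>z0\<bar> \<le> \<kappa> \<and> characteristic a z0 z"
      and t: "0 \<le> t \<and> t \<le> (1 / \<mu> - \<delta>) * ln (\<kappa>0 / \<bar>z0\<bar>)"
    have "\<bar>z t\<bar> \<le> \<bar>z0\<bar> * exp (M * T + L * t)"
      using z0 t \<open>0 \<le> T\<close> \<open>0 \<le> M\<close> \<open>0 < L\<close> early late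
      by (intro characteristic_abs_le_exp_two_phase[OF sol even]) auto
    also have "\<dots> \<le> \<kappa>0"
      using small z0 t unfolding q_def by blast
    finally show "\<bar>z t\<bar> \<le> \<kappa>0" .
  qed
qed

end
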